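(* Let $\langle E,\rightarrow\rangle$ be a computation, $b_1,b_2$ regular predicates and $b=b_1\wedge b_2$. For every event $e$ and process $p_i$, $F_b(e)[i]$ equals or precedes (on $p_i$) $F_{\min}(e)[i]$.
   Context: A computation is a directed graph $\langle E, \rightarrow\rangle$ whose vertices (events) are partitioned among processes $p_1,\dots,p_n$; events on each process are totally ordered, each process has an initial event and a final event, the path relation contains Lamport's happened-before relation, and all initial (resp. final) events lie in one strongly connected component. A vertex subset $C$ is a consistent cut if for every edge $(u,v)$, $v\in C$ implies $u\in C$. A predicate is regular if whenever consistent cuts $C_1,C_2$ satisfy it, so do $C_1\cap C_2$ and $C_1\cup C_2$. The slice of the computation with respect to a predicate $c$ is a directed graph on $E$ whose consistent cuts include every consistent cut satisfying $c$ and which has the fewest consistent cuts among all such graphs. For a regular predicate $c$, $F_c(e)[i]$ is the earliest event on $p_i$ reachable from $e$ by a path in the slice with respect to $c$. $F_{\min}(e)[i]$ is whichever of $F_{b_1}(e)[i]$ and $F_{b_2}(e)[i]$ occurs earlier on $p_i$. *)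

theory Defs
  imports Main
begin

text \<open>Events are pairs (i,k): the k-th event
  (k = 0,1,...) of process p_i.  len i is the number of events of p_i; (i,0) is its
  initial event and (i, len i - 1) its final event.  R is the edge relation of the
  directed graph; an edge (u,v) is written u -> v.\<close>

type_synonym event = "nat \<times> nat"

definition events :: "nat \<Rightarrow> (nat \<Rightarrow> nat) \<Rightarrow> event set" where
  "events n len = {(i,k). 1 \<le> i \<and> i \<le> n \<and> k < len i}"

definition init_ev :: "nat \<Rightarrow> event" where
  "init_ev i = (i, 0)"

definition final_ev :: "(nat \<Rightarrow> nat) \<Rightarrow> nat \<Rightarrow> event" where
  "final_ev len i = (i, len i - 1)"

definition computation :: "nat \<Rightarrow> (nat \<Rightarrow> nat) \<Rightarrow> event rel \<Rightarrow> bool" where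
  "computation n len R \<longleftrightarrow>
     1 \<le> n
   \<and> (\<forall>i. 1 \<le> i \<and> i \<le> n \<longrightarrow> 1 \<le> len i)
   \<and> R \<subseteq> events n len \<times> events n len
   \<comment> \<open>path relation contains happened-before (process order; message edges are edges of R)\<close>
   \<and> (\<forall>e\<in>events n len. \<forall>f\<in>events n len.
        fst e = fst f \<and> snd e < snd f \<longrightarrow> (e, f) \<in> R\<^sup>+)
   \<comment> \<open>initial events in one strongly connected component, likewise final events\<close>
   \<and> (\<forall>i j. 1 \<le> i \<and> i \<le> n \<and> 1 \<le> j \<and> j \<le> n \<longrightarrow>
        (init_ev i, init_ev j) \<in> R\<^sup>* \<and> (final_ev len i, final_ev len j) \<in> R\<^sup>*)"

definition consistent_cut :: "event set \<Rightarrow> event rel \<Rightarrow> event set \<Rightarrow> bool" where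
  "consistent_cut V G C \<longleftrightarrow> C \<subseteq> V \<and> (\<forall>(u,v)\<in>G. v \<in> C \<longrightarrow> u \<in> C)"

definition cuts :: "event set \<Rightarrow> event rel \<Rightarrow> event set set" where
  "cuts V G = {C. consistent_cut V G C}"

definition regular :: "event set \<Rightarrow> event rel \<Rightarrow> (event set \<Rightarrow> bool) \<Rightarrow> bool" where
  "regular V R c \<longleftrightarrow>
     (\<forall>C1 C2. consistent_cut V R C1 \<and> consistent_cut V R C2 \<and> c C1 \<and> c C2
        \<longrightarrow> c (C1 \<inter> C2) \<and> c (C1 \<union> C2))"

definition is_slice :: "event set \<Rightarrow> event rel \<Rightarrow> (event set \<Rightarrow> bool) \<Rightarrow> event rel \<Rightarrow> bool" where
  "is_slice V R c S \<longleftrightarrow>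
     S \<subseteq> V \<times> V
   \<and> {C. consistent_cut V R C \<and> c C} \<subseteq> cuts V S
   \<and> (\<forall>S'. S' \<subseteq> V \<times> V \<and> {C. consistent_cut V R C \<and> c C} \<subseteq> cuts V S'
          \<longrightarrow> card (cuts V S) \<le> card (cuts V S'))"

definition F :: "event set \<Rightarrow> event rel \<Rightarrow> event \<Rightarrow> nat \<Rightarrow> event" where
  "F V S e i = (THE f. f \<in> V \<and> fst f = i \<and> (e, f) \<in> S\<^sup>* \<and>
       (\<forall>g. g \<in> V \<and> fst g = i \<and> (e, g) \<in> S\<^sup>* \<longrightarrow> snd f \<le> snd g))"

definition Fmin :: "event set \<Rightarrow> event rel \<Rightarrow> event rel \<Rightarrow> event \<Rightarrow> nat \<Rightarrow> event" where
  "Fmin V S1 S2 e i =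
     (if snd (F V S1 e i) \<le> snd (F V S2 e i) then F V S1 e i else F V S2 e i)"

end

theory Submission
  imports Defs
begin

text \<open>Since b implies b1, every b-cut is a b1-cut, so by minimality every consistent cut of the
  slice for b is one of the slice for b1. Fewer cuts means more reachability, hence
  F_b(e)[i] \<le> F_b1(e)[i], and likewise for b2. For F_b1(e)[i] to be a genuine minimum rather
  than a junk value of THE, some event of p_i must be reachable from e in the slice for b1: by the
  same minimality argument that slice refines the computation, so the final event of p_i, which
  is reachable from e in the computation, is reachable in the slice too.\<close>

lemma finite_events: "finite (events n len)"
proof -
  have "events n len = Sigma {1..n} (\<lambda>i. {..<len i})" unfolding events_def by auto
  then show ?thesis by simp
qed

lemma finite_cuts: "finite V \<Longrightarrow> finite (cuts V G)"
  unfolding cuts_def consistent_cut_def by (rule finite_subset[of _ "Pow V"]) auto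

lemma cuts_Un: "cuts V (G \<union> H) = cuts V G \<inter> cuts V H"
  unfolding cuts_def consistent_cut_def by blast

text \<open>S \<union> G still admits every c-cut and its cuts are those of S that are also cuts of G, so
  minimality of card (cuts V S) rules out losing any cut.\<close>
lemma slice_cuts_subset:
  assumes slice: "is_slice V R c S" and "finite V" and "G \<subseteq> V \<times> V"
    and G: "{C. consistent_cut V R C \<and> c C} \<subseteq> cuts V G"
  shows "cuts V S \<subseteq> cuts V G"
proof -
  have S: "S \<subseteq> V \<times> V" and S_cuts: "{C. consistent_cut V R C \<and> c C} \<subseteq> cuts V S"
    and minimal: "\<And>S'. S' \<subseteq> V \<times> V \<Longrightarrow> {C. consistent_cut V R C \<and> c C} \<subseteq> cuts V S'
        \<Longrightarrow> card (cuts V S) \<le> card (cuts V S')"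
    using slice unfolding is_slice_def by blast+
  have "card (cuts V S) \<le> card (cuts V (S \<union> G))"
    using S \<open>G \<subseteq> V \<times> V\<close> S_cuts G by (intro minimal) (auto simp: cuts_Un)
  then have "card (cuts V S) \<le> card (cuts V S \<inter> cuts V G)" by (simp add: cuts_Un)
  then have "cuts V S \<inter> cuts V G = cuts V S"
    using finite_cuts[OF \<open>finite V\<close>] by (metis Int_lower1 card_seteq)
  then show ?thesis by blast
qed

lemma slice_cuts_mono:
  assumes "is_slice V R c S" and "is_slice V R d T" and "finite V"
    and "\<And>C. c C \<Longrightarrow> d C"
  shows "cuts V S \<subseteq> cuts V T"
proof (rule slice_cuts_subset[OF assms(1,3)])
  show "T \<subseteq> V \<times> V" using assms(2) unfolding is_slice_def by blast
  show "{C. consistent_cut V R C \<and> c C} \<subseteq> cuts V T"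
    using assms(2,4) unfolding is_slice_def by blast
qed

lemma slice_cuts_subset_cuts:
  assumes "is_slice V R c S" and "finite V" and "R \<subseteq> V \<times> V"
  shows "cuts V S \<subseteq> cuts V R"
  by (rule slice_cuts_subset[OF assms]) (auto simp: cuts_def)

text \<open>The S-predecessors of f form an S-cut, hence a T-cut, which is closed under T-paths into f.\<close>
lemma rtrancl_if_cuts_subset:
  assumes "cuts V S \<subseteq> cuts V T" and "S \<subseteq> V \<times> V" and "f \<in> V" and "(e, f) \<in> T\<^sup>*"
  shows "(e, f) \<in> S\<^sup>*"
proof -
  define D where "D = {u \<in> V. (u, f) \<in> S\<^sup>*}"
  have "D \<in> cuts V S" unfolding D_def cuts_def consistent_cut_def
    using \<open>S \<subseteq> V \<times> V\<close> by (auto intro: converse_rtrancl_into_rtrancl)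
  then have D: "D \<in> cuts V T" using assms(1) by blast
  from \<open>(e, f) \<in> T\<^sup>*\<close> have "e \<in> D"
  proof (induction rule: converse_rtrancl_induct)
    case base
    then show ?case using \<open>f \<in> V\<close> unfolding D_def by simp
  next
    case (step y z)
    then show ?case using D unfolding cuts_def consistent_cut_def by blast
  qed
  then show ?thesis unfolding D_def by simp
qed

lemma final_ev_in_events:
  assumes "computation n len R" and "1 \<le> i" and "i \<le> n"
  shows "final_ev len i \<in> events n len"
  using assms unfolding computation_def final_ev_def events_def by auto

lemma computation_reaches_final_ev:
  assumes comp: "computation n len R" and e: "e \<in> events n len" and "1 \<le> i" and "i \<le> n"
  shows "(e, final_ev len i) \<in> R\<^sup>*"
proof -
  obtain j k where ejk: "e = (j, k)" by (cases e)
  have j: "1 \<le> j" "j \<le> n" "k < len j" using e ejk unfolding events_def by auto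
  have "(e, final_ev len j) \<in> R\<^sup>*"
  proof (cases "k = len j - 1")
    case True
    then show ?thesis using ejk by (simp add: final_ev_def)
  next
    case False
    then have "(e, final_ev len j) \<in> R\<^sup>+"
      using comp e final_ev_in_events[OF comp j(1,2)] j ejk
      unfolding computation_def by (auto simp: final_ev_def)
    then show ?thesis by simp
  qed
  also have "(final_ev len j, final_ev len i) \<in> R\<^sup>*"
    using comp j assms(3,4) unfolding computation_def by blast
  finally show ?thesis .
qed

lemma F_eq_Min:
  assumes "finite V" and A: "A = {k. (i, k) \<in> V \<and> (e, (i, k)) \<in> S\<^sup>*}" and "A \<noteq> {}"
  shows "F V S e i = (i, Min A)"
proof -
  have "finite A"
    using \<open>finite V\<close> unfolding A by (rule finite_surj[of _ _ snd]) force
  then have "Min A \<in> A" and Min_le: "\<And>k. k \<in> A \<Longrightarrow> Min A \<le> k"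
    using \<open>A \<noteq> {}\<close> by simp_all
  show ?thesis unfolding F_def
  proof (rule the_equality)
    show "(i, Min A) \<in> V \<and> fst (i, Min A) = i \<and> (e, i, Min A) \<in> S\<^sup>* \<and>
        (\<forall>g. g \<in> V \<and> fst g = i \<and> (e, g) \<in> S\<^sup>* \<longrightarrow> snd (i, Min A) \<le> snd g)"
      using \<open>Min A \<in> A\<close> Min_le unfolding A by auto
  next
    fix f
    assume f: "f \<in> V \<and> fst f = i \<and> (e, f) \<in> S\<^sup>* \<and>
        (\<forall>g. g \<in> V \<and> fst g = i \<and> (e, g) \<in> S\<^sup>* \<longrightarrow> snd f \<le> snd g)"
    then have "snd f \<in> A" and "snd f \<le> Min A"
      using \<open>Min A \<in> A\<close> unfolding A by auto
    then show "f = (i, Min A)" using f Min_le by (metis le_antisym prod.collapse)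
  qed
qed

lemma F_le_if_cuts_subset:
  assumes "cuts V S \<subseteq> cuts V T" and "S \<subseteq> V \<times> V" and "finite V"
    and "f \<in> V" and "fst f = i" and "(e, f) \<in> T\<^sup>*"
  shows "snd (F V S e i) \<le> snd (F V T e i)"
proof -
  define A where "A = {k. (i, k) \<in> V \<and> (e, (i, k)) \<in> S\<^sup>*}"
  define B where "B = {k. (i, k) \<in> V \<and> (e, (i, k)) \<in> T\<^sup>*}"
  have "B \<subseteq> A"
    unfolding A_def B_def using rtrancl_if_cuts_subset[OF assms(1,2)] by blast
  moreover have "snd f \<in> B" using assms(4-6) unfolding B_def by auto
  moreover have "finite A"
    using \<open>finite V\<close> unfolding A_def by (rule finite_surj[of _ _ snd]) force
  ultimately have "Min A \<le> Min B" and "A \<noteq> {}" and "B \<noteq> {}" by (auto intro: Min_antimono)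
  then show ?thesis
    using F_eq_Min[OF \<open>finite V\<close> A_def] F_eq_Min[OF \<open>finite V\<close> B_def] by simp
qed

lemma F_slice_le_F_slice_weaker:
  assumes comp: "computation n len R"
    and "is_slice (events n len) R c S" and slice_d: "is_slice (events n len) R d T"
    and "\<And>C. c C \<Longrightarrow> d C"
    and "e \<in> events n len" and "1 \<le> i" and "i \<le> n"
  shows "snd (F (events n len) S e i) \<le> snd (F (events n len) T e i)"
proof (rule F_le_if_cuts_subset)
  let ?V = "events n len"
  show "cuts ?V S \<subseteq> cuts ?V T"
    by (rule slice_cuts_mono[OF assms(2,3) finite_events assms(4)])
  show "S \<subseteq> ?V \<times> ?V" using assms(2) unfolding is_slice_def by blast
  show "finite ?V" by (rule finite_events)
  show "final_ev len i \<in> ?V" by (rule final_ev_in_events[OF comp \<open>1 \<le> i\<close> \<open>i \<le> n\<close>])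
  show "fst (final_ev len i) = i" by (simp add: final_ev_def)
  have "R \<subseteq> ?V \<times> ?V" using comp unfolding computation_def by blast
  moreover have "T \<subseteq> ?V \<times> ?V" using slice_d unfolding is_slice_def by blast
  ultimately show "(e, final_ev len i) \<in> T\<^sup>*"
    using rtrancl_if_cuts_subset slice_cuts_subset_cuts[OF slice_d finite_events]
      computation_reaches_final_ev[OF comp assms(5-7)] final_ev_in_events[OF comp assms(6,7)]
    by blast
qed

theorem lemma13:
  fixes n :: nat and len :: "nat \<Rightarrow> nat" and R :: "event rel"
    and b1 b2 b :: "event set \<Rightarrow> bool" and S S1 S2 :: "event rel"
    and e :: event and i :: nat
  assumes "computation n len R"
    and "regular (events n len) R b1"
    and "regular (events n len) R b2"
    and "b = (\<lambda>C. b1 C \<and> b2 C)"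
    and "is_slice (events n len) R b S"
    and "is_slice (events n len) R b1 S1"
    and "is_slice (events n len) R b2 S2"
    and "e \<in> events n len"
    and "1 \<le> i" and "i \<le> n"
  shows "snd (F (events n len) S e i) \<le> snd (Fmin (events n len) S1 S2 e i)"
proof -
  have "snd (F (events n len) S e i) \<le> snd (F (events n len) S1 e i)"
    using F_slice_le_F_slice_weaker[OF assms(1,5,6) _ assms(8-10)] assms(4) by simp
  moreover have "snd (F (events n len) S e i) \<le> snd (F (events n len) S2 e i)"
    using F_slice_le_F_slice_weaker[OF assms(1,5,7) _ assms(8-10)] assms(4) by simp
  ultimately show ?thesis unfolding Fmin_def by simp
qed

end
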